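(* Let $p\in(0,1)$ and let $U\sim\mathrm{Bernoulli}(p)$, with $U_1=U_2=U_Y=U$. Consider the two structural causal models $$\mathcal{M}:\ X_1=U_1,\ X_2=X_1U_2,\ Y=X_1X_2U_Y; \qquad \mathcal{M}':\ X_1=U_1,\ X_2=U_2,\ Y=X_1X_2U_Y.$$ Then $\mathcal{M}$ and $\mathcal{M}'$ induce the same observational distribution of $(X_1,X_2,Y)$, the same joint interventional distributions $\mathsf{P}(Y\mid \mathrm{do}(X_1=x_1,X_2=x_2))$ for all $x_1,x_2\in\{0,1\}$, and the same interventional distributions $\mathsf{P}(Y,X_1\mid\mathrm{do}(X_2=x_2))$ for all $x_2\in\{0,1\}$, but different interventional distributions $\mathsf{P}(Y,X_2\mid\mathrm{do}(X_1=x_1))$. Consequently, without restrictions on the structural causal model, single-variable interventional effects are not identifiable from observational and joint interventional data.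
   Context: In a structural causal model, an intervention $\mathrm{do}(X=x)$ replaces the structural equation of $X$ by the constant $x$, leaving the other equations and the noise distribution unchanged. An interventional quantity is identifiable from given data regimes if any two models agreeing on those data regimes agree on that quantity. *)

theory Defs
  imports "HOL-Probability.Probability"
begin

text \<open>A structural causal model on endogenous variables X1, X2, Y (values in nat)
 with exogenous noise (U1, U2, UY) drawn from a joint pmf and structural equations
 X1 = f1 U1, X2 = f2 X1 U2, Y = fY X1 X2 UY.\<close>

record scm =
  noise :: "(nat \<times> nat \<times> nat) pmf"
  eq1 :: "nat \<Rightarrow> nat"
  eq2 :: "nat \<Rightarrow> nat \<Rightarrow> nat"
  eqY :: "nat \<Rightarrow> nat \<Rightarrow> nat \<Rightarrow> nat"

definition obs_dist :: "scm \<Rightarrow> (nat \<times> nat \<times> nat) pmf" where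
  "obs_dist M = map_pmf (\<lambda>(u1, u2, uy).
      let x1 = eq1 M u1; x2 = eq2 M x1 u2; y = eqY M x1 x2 uy in (x1, x2, y)) (noise M)"

definition do12_dist :: "scm \<Rightarrow> nat \<Rightarrow> nat \<Rightarrow> nat pmf" where
  "do12_dist M a b = map_pmf (\<lambda>(u1, u2, uy). eqY M a b uy) (noise M)"

definition do2_dist :: "scm \<Rightarrow> nat \<Rightarrow> (nat \<times> nat) pmf" where
  "do2_dist M b = map_pmf (\<lambda>(u1, u2, uy).
      let x1 = eq1 M u1 in (eqY M x1 b uy, x1)) (noise M)"

definition do1_dist :: "scm \<Rightarrow> nat \<Rightarrow> (nat \<times> nat) pmf" where
  "do1_dist M a = map_pmf (\<lambda>(u1, u2, uy).
      let x2 = eq2 M a u2 in (eqY M a x2 uy, x2)) (noise M)"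

definition shared_noise :: "real \<Rightarrow> (nat \<times> nat \<times> nat) pmf" where
  "shared_noise p = map_pmf (\<lambda>b. let u = of_bool b in (u, u, u)) (bernoulli_pmf p)"

definition model_M :: "real \<Rightarrow> scm" where
  "model_M p = \<lparr> noise = shared_noise p, eq1 = (\<lambda>u1. u1),
     eq2 = (\<lambda>x1 u2. x1 * u2), eqY = (\<lambda>x1 x2 uy. x1 * x2 * uy) \<rparr>"

definition model_M' :: "real \<Rightarrow> scm" where
  "model_M' p = \<lparr> noise = shared_noise p, eq1 = (\<lambda>u1. u1),
     eq2 = (\<lambda>x1 u2. u2), eqY = (\<lambda>x1 x2 uy. x1 * x2 * uy) \<rparr>"

end

theory Submission
  imports Defs
begin

text \<open>All three noise variables are the same bit U, so in model_M the equation
  X2 = X1 U2 evaluates to U U = U, which is what model_M' assigns to X2. The two models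
  therefore agree as long as the equation of X1 is kept. Intervening do(X1 = 0) breaks
  the link: it forces X2 = 0 in model_M but leaves X2 = U in model_M'.\<close>

lemma obs_dist_model_M_eq: "obs_dist (model_M p) = obs_dist (model_M' p)"
  unfolding obs_dist_def model_M_def model_M'_def shared_noise_def
  by (simp add: map_pmf_comp Let_def flip: of_bool_conj)

lemma do12_dist_model_M_eq: "do12_dist (model_M p) a b = do12_dist (model_M' p) a b"
  by (simp add: do12_dist_def model_M_def model_M'_def)

lemma do2_dist_model_M_eq: "do2_dist (model_M p) b = do2_dist (model_M' p) b"
  by (simp add: do2_dist_def model_M_def model_M'_def)

lemma do1_dist_model_M_0: "do1_dist (model_M p) 0 = return_pmf (0, 0)"
  by (simp add: do1_dist_def model_M_def case_prod_unfold map_pmf_const)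

lemma do1_dist_model_M'_0:
  "do1_dist (model_M' p) 0 = map_pmf (\<lambda>b. (0, of_bool b)) (bernoulli_pmf p)"
  by (simp add: do1_dist_def model_M'_def shared_noise_def map_pmf_comp Let_def)

lemma do1_dist_model_M_neq:
  assumes "0 < p" "p < 1"
  shows "do1_dist (model_M p) 0 \<noteq> do1_dist (model_M' p) 0"
proof -
  have "True \<in> set_pmf (bernoulli_pmf p)"
    using assms by simp
  then have "(0, 1) \<in> set_pmf (do1_dist (model_M' p) 0)"
    unfolding do1_dist_model_M'_0 set_map_pmf by (rule rev_image_eqI) simp
  moreover have "(0, 1) \<notin> set_pmf (do1_dist (model_M p) 0)"
    by (simp add: do1_dist_model_M_0)
  ultimately show ?thesis
    by metis
qed

theorem mainTheorem3:
  fixes p :: real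
  assumes "0 < p" and "p < 1"
  shows "obs_dist (model_M p) = obs_dist (model_M' p)
    \<and> (\<forall>x1\<in>{0,1}. \<forall>x2\<in>{0,1}. do12_dist (model_M p) x1 x2 = do12_dist (model_M' p) x1 x2)
    \<and> (\<forall>x2\<in>{0,1}. do2_dist (model_M p) x2 = do2_dist (model_M' p) x2)
    \<and> (\<exists>x1\<in>{0,1}. do1_dist (model_M p) x1 \<noteq> do1_dist (model_M' p) x1)
    \<and> \<not> (\<forall>N N' :: scm. obs_dist N = obs_dist N'
            \<and> (\<forall>x1\<in>{0,1}. \<forall>x2\<in>{0,1}. do12_dist N x1 x2 = do12_dist N' x1 x2)
            \<longrightarrow> (\<forall>x1\<in>{0,1}. do1_dist N x1 = do1_dist N' x1))"
proof -
  have separated: "do1_dist (model_M p) 0 \<noteq> do1_dist (model_M' p) 0"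
    using assms by (rule do1_dist_model_M_neq)
  then show ?thesis
    using obs_dist_model_M_eq do12_dist_model_M_eq do2_dist_model_M_eq by blast
qed

end
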